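(* Let $U$ be an $M\times M$ unitary, let $\mathrm{in}=(s_1,\dots,s_N)$ be distinct input modes each containing one photon, and let $P(t)$ be the ideal boson-sampling output distribution and $P_a(t)$ the distinguishable-particle distribution (defined in the context). Then $$\epsilon:=\tfrac12\sum_t|P(t)-P_a(t)|\le\frac12\sum_{(j_1,\dots,j_N)\in[M]^N}\ \sum_{\rho\in S_N\setminus\{\mathrm{Id}\}}\ \prod_{i=1}^N|U_{j_i,s_i}|\,|U_{j_i,s_{\rho(i)}}|=\frac12\sum_{\emptyset\neq\mathcal I_C\subseteq[N]}\ \sum_{\substack{\rho:\ \rho(i)\neq i\ \forall i\in\mathcal I_C\\ \rho(i)=i\ \forall i\notin\mathcal I_C}}\ \sum_{(j_1,\dots,j_N)}\prod_{i}|U_{j_i,s_i}||U_{j_i,s_{\rho(i)}}|,$$ and in particular $\epsilon\le\frac12\sum_{\emptyset\ne\mathcal I_C\subseteq[N]}\prod_{i\in\mathcal I_C}C_i$, where $C_i=\sum_{j=1}^M\sum_{l\neq i}|U_{j,s_i}||U_{j,s_l}|$.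
   Context: Output patterns are tuples $t=(t_1,\dots,t_M)$ of nonnegative integers summing to $N$, with $t!=\prod_it_i!$ and $\mathrm{out}$ the list of $N$ modes in which photons are detected (mode $m$ repeated $t_m$ times). The ideal probability is $P(t)=\frac1{t!}\big|\sum_{\sigma\in S_N}\prod_{j=1}^NU_{\mathrm{out}_{\sigma(j)},s_j}\big|^2$ and the distinguishable-particle probability is $P_a(t)=\frac1{t!}\sum_{\sigma\in S_N}\prod_{j=1}^N|U_{\mathrm{out}_{\sigma(j)},s_j}|^2$, which is the distribution of the occupation pattern obtained by independently sampling, for each $j$, a mode $m$ with probability $|U_{m,s_j}|^2$. *)

theory Defs
  imports "HOL-Analysis.Analysis" "HOL-Combinatorics.Permutations"
begin

text \<open>Modes are indexed 0,...,M-1 and photons 0,...,N-1. A matrix is a function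
  nat => nat => complex, of which only the entries with indices < M matter.\<close>

definition unitary_mat :: "nat \<Rightarrow> (nat \<Rightarrow> nat \<Rightarrow> complex) \<Rightarrow> bool" where
  "unitary_mat M U \<longleftrightarrow>
     (\<forall>i<M. \<forall>j<M. (\<Sum>k<M. U k i * cnj (U k j)) = (if i = j then 1 else 0)) \<and>
     (\<forall>i<M. \<forall>j<M. (\<Sum>k<M. U i k * cnj (U j k)) = (if i = j then 1 else 0))"

definition patterns :: "nat \<Rightarrow> nat \<Rightarrow> (nat \<Rightarrow> nat) set" where
  "patterns M N = {t. (\<forall>m\<ge>M. t m = 0) \<and> (\<Sum>m<M. t m) = N}"

definition tfact :: "nat \<Rightarrow> (nat \<Rightarrow> nat) \<Rightarrow> real" where
  "tfact M t = (\<Prod>m<M. fact (t m))"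

definition outl :: "nat \<Rightarrow> (nat \<Rightarrow> nat) \<Rightarrow> nat list" where
  "outl M t = concat (map (\<lambda>m. replicate (t m) m) [0..<M])"

definition P_ideal :: "nat \<Rightarrow> nat \<Rightarrow> (nat \<Rightarrow> nat \<Rightarrow> complex) \<Rightarrow> (nat \<Rightarrow> nat) \<Rightarrow> (nat \<Rightarrow> nat) \<Rightarrow> real" where
  "P_ideal M N U s t = (1 / tfact M t) *
     (cmod (\<Sum>\<sigma>\<in>{\<sigma>. \<sigma> permutes {..<N}}. \<Prod>j<N. U (outl M t ! \<sigma> j) (s j)))\<^sup>2"

definition P_dist :: "nat \<Rightarrow> nat \<Rightarrow> (nat \<Rightarrow> nat \<Rightarrow> complex) \<Rightarrow> (nat \<Rightarrow> nat) \<Rightarrow> (nat \<Rightarrow> nat) \<Rightarrow> real" where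
  "P_dist M N U s t = (1 / tfact M t) *
     (\<Sum>\<sigma>\<in>{\<sigma>. \<sigma> permutes {..<N}}. \<Prod>j<N. (cmod (U (outl M t ! \<sigma> j) (s j)))\<^sup>2)"

definition tvd :: "nat \<Rightarrow> nat \<Rightarrow> (nat \<Rightarrow> nat \<Rightarrow> complex) \<Rightarrow> (nat \<Rightarrow> nat) \<Rightarrow> real" where
  "tvd M N U s = (1/2) * (\<Sum>t\<in>patterns M N. \<bar>P_ideal M N U s t - P_dist M N U s t\<bar>)"

definition Ccoef :: "nat \<Rightarrow> nat \<Rightarrow> (nat \<Rightarrow> nat \<Rightarrow> complex) \<Rightarrow> (nat \<Rightarrow> nat) \<Rightarrow> nat \<Rightarrow> real" where
  "Ccoef M N U s i = (\<Sum>j<M. \<Sum>l\<in>{..<N} - {i}. cmod (U j (s i)) * cmod (U j (s l)))"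

end

theory Submission
  imports Defs "HOL-Combinatorics.Multiset_Permutations"
begin

(* Writing the amplitude as a permanent and expanding |per A|^2 = per A * cnj (per A) as a
   double sum over permutations sigma, rho, the diagonal rho = id is exactly the
   distinguishable-particle permanent, so |P(t) - P_a(t)| is bounded by the moduli of the
   off-diagonal terms. Summing over patterns with weight 1/t! turns sums over permutations of
   the list of detected modes into a sum over all mode assignments j in [M]^N, because an
   assignment with pattern t arises from exactly t! permutations. Grouping the off-diagonal
   rho by their set I of moved points, the modes of the photons outside I sum out to 1 by
   unitarity, and restricting rho to I bounds what is left by the product of the C_i. *)

section \<open>Permanents\<close>

definition permanent :: "nat \<Rightarrow> (nat \<Rightarrow> nat \<Rightarrow> 'a::comm_semiring_1) \<Rightarrow> 'a" where
  "permanent n A = (\<Sum>\<sigma>\<in>{\<sigma>. \<sigma> permutes {..<n}}. \<Prod>j<n. A (\<sigma> j) j)"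

lemma cnj_permanent_reindex:
  fixes A :: "nat \<Rightarrow> nat \<Rightarrow> complex"
  assumes "\<sigma> permutes {..<n}"
  shows "cnj (permanent n A) = (\<Sum>\<rho>\<in>{\<rho>. \<rho> permutes {..<n}}. \<Prod>i<n. cnj (A (\<sigma> i) (\<rho> i)))"
proof -
  define T where "T \<tau> = (\<Prod>j<n. cnj (A (\<tau> j) j))" for \<tau>
  have "cnj (permanent n A) = (\<Sum>\<tau>\<in>{\<tau>. \<tau> permutes {..<n}}. T \<tau>)"
    by (simp add: permanent_def T_def)
  also have "\<dots> = (\<Sum>\<tau>\<in>{\<tau>. \<tau> permutes {..<n}}. T (\<sigma> \<circ> \<tau>))"
    by (rule setum_permutations_compose_left[OF assms])
  also have "\<dots> = (\<Sum>\<rho>\<in>{\<rho>. \<rho> permutes {..<n}}. T (\<sigma> \<circ> inv \<rho>))"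
    by (rule sum_permutations_inverse)
  also have "\<dots> = (\<Sum>\<rho>\<in>{\<rho>. \<rho> permutes {..<n}}. \<Prod>i<n. cnj (A (\<sigma> i) (\<rho> i)))"
  proof (rule sum.cong[OF refl])
    fix \<rho> assume "\<rho> \<in> {\<rho>. \<rho> permutes {..<n}}"
    then have \<rho>: "\<rho> permutes {..<n}" by simp
    have "T (\<sigma> \<circ> inv \<rho>) = (\<Prod>i<n. cnj (A (\<sigma> (inv \<rho> (\<rho> i))) (\<rho> i)))"
      unfolding T_def using prod.permute[OF \<rho>] by (simp add: o_def)
    then show "T (\<sigma> \<circ> inv \<rho>) = (\<Prod>i<n. cnj (A (\<sigma> i) (\<rho> i)))"
      using permutes_inverses(2)[OF \<rho>] by simp
  qed
  finally show ?thesis .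
qed

lemma norm_permanent_sq_expand:
  fixes A :: "nat \<Rightarrow> nat \<Rightarrow> complex"
  shows "complex_of_real ((cmod (permanent n A))\<^sup>2) =
    (\<Sum>\<sigma>\<in>{\<sigma>. \<sigma> permutes {..<n}}. \<Sum>\<rho>\<in>{\<rho>. \<rho> permutes {..<n}}.
       \<Prod>i<n. A (\<sigma> i) i * cnj (A (\<sigma> i) (\<rho> i)))"
proof -
  have "complex_of_real ((cmod (permanent n A))\<^sup>2) = permanent n A * cnj (permanent n A)"
    by (rule complex_norm_square)
  also have "\<dots> = (\<Sum>\<sigma>\<in>{\<sigma>. \<sigma> permutes {..<n}}. (\<Prod>j<n. A (\<sigma> j) j) * cnj (permanent n A))"
    by (simp add: permanent_def sum_distrib_right)
  also have "\<dots> = (\<Sum>\<sigma>\<in>{\<sigma>. \<sigma> permutes {..<n}}. \<Sum>\<rho>\<in>{\<rho>. \<rho> permutes {..<n}}.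
       \<Prod>i<n. A (\<sigma> i) i * cnj (A (\<sigma> i) (\<rho> i)))"
    by (intro sum.cong refl) (simp add: cnj_permanent_reindex sum_distrib_left prod.distrib)
  finally show ?thesis .
qed

lemma norm_permanent_sq_minus_permanent_norm_sq_le:
  fixes A :: "nat \<Rightarrow> nat \<Rightarrow> complex"
  shows "\<bar>(cmod (permanent n A))\<^sup>2 - permanent n (\<lambda>i j. (cmod (A i j))\<^sup>2)\<bar>
    \<le> (\<Sum>\<sigma>\<in>{\<sigma>. \<sigma> permutes {..<n}}. \<Sum>\<rho>\<in>{\<rho>. \<rho> permutes {..<n} \<and> \<rho> \<noteq> id}.
         \<Prod>i<n. cmod (A (\<sigma> i) i) * cmod (A (\<sigma> i) (\<rho> i)))"
proof -
  define P where "P = {\<sigma>. \<sigma> permutes {..<n}}"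
  define W where "W \<sigma> \<rho> = (\<Prod>i<n. A (\<sigma> i) i * cnj (A (\<sigma> i) (\<rho> i)))" for \<sigma> \<rho>
  have idP: "id \<in> P" by (simp add: P_def)
  have nonid: "{\<rho>. \<rho> permutes {..<n} \<and> \<rho> \<noteq> id} = P - {id}" by (auto simp: P_def)
  have diag: "complex_of_real (permanent n (\<lambda>i j. (cmod (A i j))\<^sup>2)) = (\<Sum>\<sigma>\<in>P. W \<sigma> id)"
    unfolding permanent_def P_def W_def id_apply
    by (simp only: of_real_sum of_real_prod complex_norm_square)
  have expand: "complex_of_real ((cmod (permanent n A))\<^sup>2) = (\<Sum>\<sigma>\<in>P. \<Sum>\<rho>\<in>P. W \<sigma> \<rho>)"
    unfolding P_def W_def by (rule norm_permanent_sq_expand)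
  have split_id: "(\<Sum>\<rho>\<in>P. W \<sigma> \<rho>) = W \<sigma> id + (\<Sum>\<rho>\<in>P - {id}. W \<sigma> \<rho>)" for \<sigma>
    by (rule sum.remove[OF _ idP]) (simp add: P_def finite_permutations)
  have "complex_of_real ((cmod (permanent n A))\<^sup>2 - permanent n (\<lambda>i j. (cmod (A i j))\<^sup>2))
      = (\<Sum>\<sigma>\<in>P. \<Sum>\<rho>\<in>P - {id}. W \<sigma> \<rho>)"
    by (simp only: of_real_diff expand diag split_id sum.distrib) simp
  then have "\<bar>(cmod (permanent n A))\<^sup>2 - permanent n (\<lambda>i j. (cmod (A i j))\<^sup>2)\<bar>
      = cmod (\<Sum>\<sigma>\<in>P. \<Sum>\<rho>\<in>P - {id}. W \<sigma> \<rho>)"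
    by (metis norm_of_real)
  also have "\<dots> \<le> (\<Sum>\<sigma>\<in>P. \<Sum>\<rho>\<in>P - {id}. cmod (W \<sigma> \<rho>))"
    by (rule order_trans[OF norm_sum sum_mono[OF norm_sum]])
  also have "\<dots> = (\<Sum>\<sigma>\<in>P. \<Sum>\<rho>\<in>P - {id}. \<Prod>i<n. cmod (A (\<sigma> i) i) * cmod (A (\<sigma> i) (\<rho> i)))"
    by (simp add: W_def prod_norm[symmetric] norm_mult)
  finally show ?thesis unfolding nonid P_def .
qed

section \<open>Permutations of a list with repeated entries\<close>

lemma card_permute_list_fibre_eq:
  assumes "mset ys = mset xs"
  shows "card {\<sigma>. \<sigma> permutes {..<length xs} \<and> permute_list \<sigma> xs = ys}
       = card {\<sigma>. \<sigma> permutes {..<length xs} \<and> permute_list \<sigma> xs = xs}"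
proof -
  obtain p where p: "p permutes {..<length xs}" "permute_list p xs = ys"
    using mset_eq_permutation[OF assms] .
  have inv_p: "inv p permutes {..<length xs}" using p(1) by (rule permutes_inv)
  have "bij_betw (\<lambda>\<sigma>. \<sigma> \<circ> p)
      {\<sigma>. \<sigma> permutes {..<length xs} \<and> permute_list \<sigma> xs = xs}
      {\<sigma>. \<sigma> permutes {..<length xs} \<and> permute_list \<sigma> xs = ys}"
  proof (rule bij_betw_byWitness[where f'="\<lambda>\<sigma>. \<sigma> \<circ> inv p"])
    show "\<forall>\<sigma>\<in>{\<sigma>. \<sigma> permutes {..<length xs} \<and> permute_list \<sigma> xs = xs}. \<sigma> \<circ> p \<circ> inv p = \<sigma>"
      using permutes_inv_o(1)[OF p(1)] by (simp add: o_assoc[symmetric])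
    show "\<forall>\<sigma>\<in>{\<sigma>. \<sigma> permutes {..<length xs} \<and> permute_list \<sigma> xs = ys}. \<sigma> \<circ> inv p \<circ> p = \<sigma>"
      using permutes_inv_o(2)[OF p(1)] by (simp add: o_assoc[symmetric])
    show "(\<lambda>\<sigma>. \<sigma> \<circ> p) ` {\<sigma>. \<sigma> permutes {..<length xs} \<and> permute_list \<sigma> xs = xs}
        \<subseteq> {\<sigma>. \<sigma> permutes {..<length xs} \<and> permute_list \<sigma> xs = ys}"
      using p by (auto simp: permute_list_compose intro: permutes_compose)
    have "permute_list (\<sigma> \<circ> inv p) xs = xs" if "permute_list \<sigma> xs = ys" for \<sigma>
    proof -
      have "permute_list (\<sigma> \<circ> inv p) xs = permute_list (inv p) (permute_list p xs)"
        using inv_p that p(2) by (simp add: permute_list_compose)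
      also have "\<dots> = permute_list (p \<circ> inv p) xs"
        using inv_p by (simp add: permute_list_compose)
      also have "\<dots> = xs"
        using permutes_inv_o(1)[OF p(1)] by simp
      finally show ?thesis .
    qed
    then show "(\<lambda>\<sigma>. \<sigma> \<circ> inv p) ` {\<sigma>. \<sigma> permutes {..<length xs} \<and> permute_list \<sigma> xs = ys}
        \<subseteq> {\<sigma>. \<sigma> permutes {..<length xs} \<and> permute_list \<sigma> xs = xs}"
      using inv_p by (auto intro: permutes_compose)
  qed
  then show ?thesis by (rule bij_betw_same_card[symmetric])
qed

lemma sum_permutes_permute_list_group:
  "(\<Sum>\<sigma>\<in>{\<sigma>. \<sigma> permutes {..<length xs}}. G (permute_list \<sigma> xs))
     = (\<Sum>ys\<in>permutations_of_multiset (mset xs).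
          of_nat (card {\<sigma>. \<sigma> permutes {..<length xs} \<and> permute_list \<sigma> xs = ys}) * G ys)"
proof -
  define fibre where "fibre ys = {\<sigma>. \<sigma> permutes {..<length xs} \<and> permute_list \<sigma> xs = ys}" for ys
  have img: "(\<lambda>\<sigma>. permute_list \<sigma> xs) ` {\<sigma>. \<sigma> permutes {..<length xs}}
      \<subseteq> permutations_of_multiset (mset xs)"
    by (auto simp: mset_permute_list intro: permutations_of_multisetI)
  have "(\<Sum>\<sigma>\<in>{\<sigma>. \<sigma> permutes {..<length xs}}. G (permute_list \<sigma> xs))
      = (\<Sum>ys\<in>permutations_of_multiset (mset xs). \<Sum>\<sigma>\<in>fibre ys. G (permute_list \<sigma> xs))"
    unfolding fibre_def
    using sum.group[OF finite_permutations[OF finite_lessThan] finite_permutations_of_multiset img,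
        of "\<lambda>\<sigma>. G (permute_list \<sigma> xs)", symmetric]
    by (simp only: mem_Collect_eq)
  also have "\<dots> = (\<Sum>ys\<in>permutations_of_multiset (mset xs). \<Sum>\<sigma>\<in>fibre ys. G ys)"
    by (intro sum.cong refl) (simp add: fibre_def)
  finally show ?thesis by (simp add: fibre_def)
qed

lemma card_permute_list_fibre:
  assumes "mset ys = mset xs"
  shows "card {\<sigma>. \<sigma> permutes {..<length xs} \<and> permute_list \<sigma> xs = ys}
     = (\<Prod>x\<in>set_mset (mset xs). fact (count (mset xs) x))"
proof -
  define Q where "Q = permutations_of_multiset (mset xs)"
  define k where "k = card {\<sigma>. \<sigma> permutes {..<length xs} \<and> permute_list \<sigma> xs = xs}"
  have "fact (length xs) = card {\<sigma>. \<sigma> permutes {..<length xs}}"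
    by (simp add: card_permutations)
  also have "\<dots> = (\<Sum>zs\<in>Q. card {\<sigma>. \<sigma> permutes {..<length xs} \<and> permute_list \<sigma> xs = zs})"
    using sum_permutes_permute_list_group[of "\<lambda>_. 1 :: nat" xs] by (simp add: Q_def)
  also have "\<dots> = (\<Sum>zs\<in>Q. k)"
    unfolding k_def Q_def
    by (intro sum.cong refl card_permute_list_fibre_eq) (simp add: permutations_of_multisetD)
  finally have "card Q * k = card Q * (\<Prod>x\<in>set_mset (mset xs). fact (count (mset xs) x))"
    using card_permutations_of_multiset_aux[of "mset xs"] by (simp add: Q_def)
  moreover have "card Q > 0"
    by (simp add: Q_def card_gt_0_iff)
  ultimately show ?thesis
    using card_permute_list_fibre_eq[OF assms] by (simp add: k_def)
qed

lemma sum_permutes_permute_list: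
  fixes G :: "'a list \<Rightarrow> 'b::semiring_1"
  shows "(\<Sum>\<sigma>\<in>{\<sigma>. \<sigma> permutes {..<length xs}}. G (permute_list \<sigma> xs))
     = of_nat (\<Prod>x\<in>set_mset (mset xs). fact (count (mset xs) x)) *
       (\<Sum>ys\<in>permutations_of_multiset (mset xs). G ys)"
  unfolding sum_permutes_permute_list_group sum_distrib_left
  by (intro sum.cong refl) (simp add: card_permute_list_fibre permutations_of_multisetD)

section \<open>Output patterns\<close>

lemma outl_Suc: "outl (Suc M) t = outl M t @ replicate (t M) M"
  by (simp add: outl_def)

lemma count_mset_outl: "count (mset (outl M t)) m = (if m < M then t m else 0)"
  by (induction M) (auto simp: outl_def)

lemma set_outl_subset: "set (outl M t) \<subseteq> {..<M}"
  by (induction M) (auto simp: outl_Suc outl_def)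

lemma length_outl: "length (outl M t) = (\<Sum>m<M. t m)"
  by (induction M) (auto simp: outl_Suc outl_def)

lemma count_mset_outl_pattern: "t \<in> patterns M N \<Longrightarrow> count (mset (outl M t)) = t"
  by (auto simp: fun_eq_iff count_mset_outl patterns_def)

lemma tfact_eq_prod_fact_count_outl:
  "tfact M t = (\<Prod>x\<in>set_mset (mset (outl M t)). fact (count (mset (outl M t)) x))"
proof -
  have "tfact M t = (\<Prod>m<M. fact (count (mset (outl M t)) m))"
    by (simp add: tfact_def count_mset_outl)
  also have "\<dots> = (\<Prod>x\<in>set_mset (mset (outl M t)). fact (count (mset (outl M t)) x))"
    by (rule prod.mono_neutral_right)
      (use set_outl_subset in \<open>auto simp: count_mset_0_iff[THEN iffD2]\<close>)
  finally show ?thesis .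
qed

lemma tfact_pos: "tfact M t > 0"
  by (simp add: tfact_def prod_pos)

lemma patterns_eq_image_count_mset:
  "patterns M N = (\<lambda>ys. count (mset ys)) ` {ys. set ys \<subseteq> {..<M} \<and> length ys = N}"
proof (intro equalityI subsetI)
  fix t assume t: "t \<in> patterns M N"
  then have "outl M t \<in> {ys. set ys \<subseteq> {..<M} \<and> length ys = N}"
    using set_outl_subset by (simp add: length_outl patterns_def)
  then show "t \<in> (\<lambda>ys. count (mset ys)) ` {ys. set ys \<subseteq> {..<M} \<and> length ys = N}"
    by (rule rev_image_eqI) (simp add: count_mset_outl_pattern[OF t])
next
  fix t assume "t \<in> (\<lambda>ys. count (mset ys)) ` {ys. set ys \<subseteq> {..<M} \<and> length ys = N}"
  then obtain ys where ys: "set ys \<subseteq> {..<M}" "length ys = N" "t = count (mset ys)" by auto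
  have "t m = 0" if "m \<ge> M" for m
  proof -
    have "m \<notin> set ys" using ys(1) that by auto
    then show ?thesis by (simp add: ys(3) count_mset_0_iff)
  qed
  moreover have "(\<Sum>m<M. t m) = N"
    using ys sum_count_set[of ys "{..<M}"] by (simp add: count_mset)
  ultimately show "t \<in> patterns M N"
    by (simp add: patterns_def)
qed

lemma permutations_of_multiset_outl:
  assumes "t \<in> patterns M N"
  shows "permutations_of_multiset (mset (outl M t))
    = {ys \<in> {ys. set ys \<subseteq> {..<M} \<and> length ys = N}. count (mset ys) = t}"
proof (intro set_eqI iffI)
  fix ys assume "ys \<in> permutations_of_multiset (mset (outl M t))"
  then have ys: "mset ys = mset (outl M t)" by (rule permutations_of_multisetD)
  have "set ys \<subseteq> {..<M}"
    using mset_eq_setD[OF ys] set_outl_subset by simp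
  moreover have "length ys = N"
    using mset_eq_length[OF ys] assms by (simp add: length_outl patterns_def)
  ultimately show "ys \<in> {ys \<in> {ys. set ys \<subseteq> {..<M} \<and> length ys = N}. count (mset ys) = t}"
    using ys count_mset_outl_pattern[OF assms] by simp
next
  fix ys assume "ys \<in> {ys \<in> {ys. set ys \<subseteq> {..<M} \<and> length ys = N}. count (mset ys) = t}"
  then have "count (mset ys) = count (mset (outl M t))"
    using count_mset_outl_pattern[OF assms] by simp
  then have "mset ys = mset (outl M t)" by (simp only: count_inject)
  then show "ys \<in> permutations_of_multiset (mset (outl M t))"
    by (rule permutations_of_multisetI)
qed

lemma sum_lists_group_patterns:
  "(\<Sum>ys\<in>{ys. set ys \<subseteq> {..<M} \<and> length ys = N}. G ys)
    = (\<Sum>t\<in>patterns M N. \<Sum>ys\<in>permutations_of_multiset (mset (outl M t)). G ys)"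
proof -
  define L where "L = {ys. set ys \<subseteq> {..<M} \<and> length ys = N}"
  have fin_L: "finite L"
    unfolding L_def by (rule finite_lists_length_eq) simp
  have patterns: "patterns M N = (\<lambda>ys. count (mset ys)) ` L"
    unfolding L_def by (rule patterns_eq_image_count_mset)
  have "(\<Sum>ys\<in>L. G ys) = (\<Sum>t\<in>patterns M N. \<Sum>ys\<in>{ys \<in> L. count (mset ys) = t}. G ys)"
    by (rule sum.group[symmetric]) (simp_all add: fin_L patterns)
  also have "\<dots> = (\<Sum>t\<in>patterns M N. \<Sum>ys\<in>permutations_of_multiset (mset (outl M t)). G ys)"
    by (intro sum.cong refl) (simp add: permutations_of_multiset_outl L_def)
  finally show ?thesis unfolding L_def .
qed

lemma sum_PiE_lessThan_eq_sum_lists: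
  assumes F_cong: "\<And>j j'. (\<And>i. i < N \<Longrightarrow> j i = j' i) \<Longrightarrow> F j = F j'"
  shows "(\<Sum>j\<in>PiE {..<N} (\<lambda>_. {..<M}). F j)
    = (\<Sum>ys\<in>{ys. set ys \<subseteq> {..<M} \<and> length ys = N}. F (\<lambda>i. ys ! i))"
proof (rule sum.reindex_bij_witness[where j="\<lambda>j. map j [0..<N]" and i="\<lambda>ys. restrict (\<lambda>i. ys ! i) {..<N}"])
  fix ys assume ys: "ys \<in> {ys. set ys \<subseteq> {..<M} \<and> length ys = N}"
  then show "map (restrict (\<lambda>i. ys ! i) {..<N}) [0..<N] = ys"
    by (auto intro: nth_equalityI)
  have "ys ! i < M" if "i < N" for i
    using ys that nth_mem by blast
  then show "restrict (\<lambda>i. ys ! i) {..<N} \<in> PiE {..<N} (\<lambda>_. {..<M})"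
    by simp
next
  fix j assume j: "j \<in> PiE {..<N} (\<lambda>_. {..<M})"
  then show "restrict (\<lambda>i. map j [0..<N] ! i) {..<N} = j"
    by (auto simp: PiE_def extensional_def fun_eq_iff)
  from j show "map j [0..<N] \<in> {ys. set ys \<subseteq> {..<M} \<and> length ys = N}"
    by (auto simp: PiE_def Pi_def)
  show "F (\<lambda>i. map j [0..<N] ! i) = F j"
    by (rule F_cong) simp
qed

lemma sum_permutes_outl:
  assumes "t \<in> patterns M N"
    and F_cong: "\<And>j j'. (\<And>i. i < N \<Longrightarrow> j i = j' i) \<Longrightarrow> F j = F j'"
  shows "(\<Sum>\<sigma>\<in>{\<sigma>. \<sigma> permutes {..<N}}. F (\<lambda>i. outl M t ! \<sigma> i))
    = tfact M t * (\<Sum>ys\<in>permutations_of_multiset (mset (outl M t)). F (\<lambda>i. ys ! i))"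
proof -
  have N: "length (outl M t) = N"
    using assms by (simp add: length_outl patterns_def)
  have "(\<Sum>\<sigma>\<in>{\<sigma>. \<sigma> permutes {..<N}}. F (\<lambda>i. outl M t ! \<sigma> i))
      = (\<Sum>\<sigma>\<in>{\<sigma>. \<sigma> permutes {..<length (outl M t)}}. F (\<lambda>i. permute_list \<sigma> (outl M t) ! i))"
    unfolding N by (intro sum.cong refl F_cong) (simp add: permute_list_nth N)
  also have "\<dots> = tfact M t * (\<Sum>ys\<in>permutations_of_multiset (mset (outl M t)). F (\<lambda>i. ys ! i))"
    by (simp only: sum_permutes_permute_list[where G="\<lambda>ys. F (\<lambda>i. ys ! i)"]
        tfact_eq_prod_fact_count_outl of_nat_prod of_nat_fact)
  finally show ?thesis .
qed

lemma sum_patterns_permutes_outl: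
  fixes F :: "(nat \<Rightarrow> nat) \<Rightarrow> real"
  assumes F_cong: "\<And>j j'. (\<And>i. i < N \<Longrightarrow> j i = j' i) \<Longrightarrow> F j = F j'"
  shows "(\<Sum>t\<in>patterns M N. (1 / tfact M t) * (\<Sum>\<sigma>\<in>{\<sigma>. \<sigma> permutes {..<N}}. F (\<lambda>i. outl M t ! \<sigma> i)))
       = (\<Sum>j\<in>PiE {..<N} (\<lambda>_. {..<M}). F j)"
proof -
  have "(\<Sum>t\<in>patterns M N. (1 / tfact M t) * (\<Sum>\<sigma>\<in>{\<sigma>. \<sigma> permutes {..<N}}. F (\<lambda>i. outl M t ! \<sigma> i)))
      = (\<Sum>t\<in>patterns M N. \<Sum>ys\<in>permutations_of_multiset (mset (outl M t)). F (\<lambda>i. ys ! i))"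
  proof (intro sum.cong refl)
    fix t assume "t \<in> patterns M N"
    from sum_permutes_outl[where F=F, OF this F_cong] tfact_pos[of M t]
    show "(1 / tfact M t) * (\<Sum>\<sigma>\<in>{\<sigma>. \<sigma> permutes {..<N}}. F (\<lambda>i. outl M t ! \<sigma> i))
        = (\<Sum>ys\<in>permutations_of_multiset (mset (outl M t)). F (\<lambda>i. ys ! i))"
      by simp
  qed
  also have "\<dots> = (\<Sum>ys\<in>{ys. set ys \<subseteq> {..<M} \<and> length ys = N}. F (\<lambda>i. ys ! i))"
    by (rule sum_lists_group_patterns[symmetric])
  also have "\<dots> = (\<Sum>j\<in>PiE {..<N} (\<lambda>_. {..<M}). F j)"
    by (rule sum_PiE_lessThan_eq_sum_lists[OF F_cong, symmetric])
  finally show ?thesis .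
qed

section \<open>Distance to the distinguishable-particle distribution\<close>

lemma abs_P_ideal_minus_P_dist_le:
  "\<bar>P_ideal M N U s t - P_dist M N U s t\<bar>
    \<le> (1 / tfact M t) * (\<Sum>\<sigma>\<in>{\<sigma>. \<sigma> permutes {..<N}}. \<Sum>\<rho>\<in>{\<rho>. \<rho> permutes {..<N} \<and> \<rho> \<noteq> id}.
         \<Prod>i<N. cmod (U (outl M t ! \<sigma> i) (s i)) * cmod (U (outl M t ! \<sigma> i) (s (\<rho> i))))"
proof -
  define A where "A i j = U (outl M t ! i) (s j)" for i j
  have "P_ideal M N U s t - P_dist M N U s t
      = (1 / tfact M t) * ((cmod (permanent N A))\<^sup>2 - permanent N (\<lambda>i j. (cmod (A i j))\<^sup>2))"
    unfolding P_ideal_def P_dist_def permanent_def A_def by (simp only: right_diff_distrib)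
  moreover have "0 < 1 / tfact M t"
    using tfact_pos[of M t] by simp
  ultimately have "\<bar>P_ideal M N U s t - P_dist M N U s t\<bar>
      = (1 / tfact M t) * \<bar>(cmod (permanent N A))\<^sup>2 - permanent N (\<lambda>i j. (cmod (A i j))\<^sup>2)\<bar>"
    by (simp only: abs_mult abs_of_pos)
  also have "\<dots> \<le> (1 / tfact M t) * (\<Sum>\<sigma>\<in>{\<sigma>. \<sigma> permutes {..<N}}. \<Sum>\<rho>\<in>{\<rho>. \<rho> permutes {..<N} \<and> \<rho> \<noteq> id}.
         \<Prod>i<N. cmod (A (\<sigma> i) i) * cmod (A (\<sigma> i) (\<rho> i)))"
    using tfact_pos[of M t]
    by (intro mult_left_mono norm_permanent_sq_minus_permanent_norm_sq_le) simp
  finally show ?thesis by (simp only: A_def)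
qed

lemma tvd_le_sum_nonid_permutes:
  "tvd M N U s \<le> (1/2) * (\<Sum>j\<in>PiE {..<N} (\<lambda>_. {..<M}).
     \<Sum>\<rho>\<in>{\<rho>. \<rho> permutes {..<N} \<and> \<rho> \<noteq> id}.
       \<Prod>i<N. cmod (U (j i) (s i)) * cmod (U (j i) (s (\<rho> i))))"
proof -
  have "(\<Sum>t\<in>patterns M N. \<bar>P_ideal M N U s t - P_dist M N U s t\<bar>)
      \<le> (\<Sum>t\<in>patterns M N. (1 / tfact M t) * (\<Sum>\<sigma>\<in>{\<sigma>. \<sigma> permutes {..<N}}.
           \<Sum>\<rho>\<in>{\<rho>. \<rho> permutes {..<N} \<and> \<rho> \<noteq> id}.
             \<Prod>i<N. cmod (U (outl M t ! \<sigma> i) (s i)) * cmod (U (outl M t ! \<sigma> i) (s (\<rho> i)))))"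
    by (intro sum_mono abs_P_ideal_minus_P_dist_le)
  also have "\<dots> = (\<Sum>j\<in>PiE {..<N} (\<lambda>_. {..<M}). \<Sum>\<rho>\<in>{\<rho>. \<rho> permutes {..<N} \<and> \<rho> \<noteq> id}.
       \<Prod>i<N. cmod (U (j i) (s i)) * cmod (U (j i) (s (\<rho> i))))"
    by (rule sum_patterns_permutes_outl[where F="\<lambda>j. \<Sum>\<rho>\<in>{\<rho>. \<rho> permutes {..<N} \<and> \<rho> \<noteq> id}.
       \<Prod>i<N. cmod (U (j i) (s i)) * cmod (U (j i) (s (\<rho> i)))"])
      (intro sum.cong prod.cong refl; simp)
  finally show ?thesis by (simp add: tvd_def)
qed

section \<open>Permutations with prescribed set of moved points\<close>

definition permutes_with_support :: "nat \<Rightarrow> nat set \<Rightarrow> (nat \<Rightarrow> nat) set" where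
  "permutes_with_support n I =
     {\<rho>. \<rho> permutes {..<n} \<and> (\<forall>i\<in>I. \<rho> i \<noteq> i) \<and> (\<forall>i\<in>{..<n} - I. \<rho> i = i)}"

lemma permutes_with_support_fixes_outside:
  assumes "\<rho> \<in> permutes_with_support n I" "i \<notin> I"
  shows "\<rho> i = i"
  using assms permutes_not_in[of \<rho> "{..<n}" i]
  by (cases "i < n") (auto simp: permutes_with_support_def)

lemma sum_nonid_permutes_group_by_support:
  fixes g :: "(nat \<Rightarrow> nat) \<Rightarrow> 'a::comm_monoid_add"
  shows "(\<Sum>\<rho>\<in>{\<rho>. \<rho> permutes {..<n} \<and> \<rho> \<noteq> id}. g \<rho>)
    = (\<Sum>I\<in>{I. I \<subseteq> {..<n} \<and> I \<noteq> {}}.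
         \<Sum>\<rho>\<in>permutes_with_support n I. g \<rho>)"
proof -
  define R where "R = {\<rho>. \<rho> permutes {..<n} \<and> \<rho> \<noteq> id}"
  define supp where "supp \<rho> = {i\<in>{..<n}. \<rho> i \<noteq> i}" for \<rho> :: "nat \<Rightarrow> nat"
  have fin_R: "finite R"
    unfolding R_def by (rule finite_subset[OF _ finite_permutations[of "{..<n}"]]) auto
  have fibre: "{\<rho> \<in> R. supp \<rho> = I}
      = permutes_with_support n I"
    if "I \<subseteq> {..<n}" "I \<noteq> {}" for I
    using that by (auto simp: R_def supp_def permutes_with_support_def)
  have supp_nonempty: "\<exists>i<n. \<rho> i \<noteq> i" if "\<rho> \<in> R" for \<rho>
  proof (rule ccontr)
    assume "\<not> (\<exists>i<n. \<rho> i \<noteq> i)"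
    with that have "\<rho> \<in> permutes_with_support n {}"
      by (auto simp: R_def permutes_with_support_def)
    then have "\<rho> i = i" for i
      using permutes_with_support_fixes_outside by blast
    with that show False by (auto simp: R_def fun_eq_iff)
  qed
  have "(\<Sum>\<rho>\<in>R. g \<rho>) = (\<Sum>I\<in>{I. I \<subseteq> {..<n} \<and> I \<noteq> {}}. \<Sum>\<rho>\<in>{\<rho> \<in> R. supp \<rho> = I}. g \<rho>)"
    by (rule sum.group[symmetric, OF fin_R]) (use supp_nonempty in \<open>auto simp: supp_def\<close>)
  also have "\<dots> = (\<Sum>I\<in>{I. I \<subseteq> {..<n} \<and> I \<noteq> {}}.
      \<Sum>\<rho>\<in>permutes_with_support n I. g \<rho>)"
    by (intro sum.cong refl) (simp add: fibre)
  finally show ?thesis unfolding R_def .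
qed

text \<open>A permutation with support exactly \<open>I\<close> is determined by its values on \<open>I\<close>,
  which avoid their own index, so restriction embeds these permutations into
  \<open>\<Pi>\<^sub>E i\<in>I. {..<n} - {i}\<close>.\<close>
lemma sum_exact_support_prod_le:
  fixes f :: "nat \<Rightarrow> nat \<Rightarrow> real"
  assumes "I \<subseteq> {..<n}" and f_nonneg: "\<And>i l. 0 \<le> f i l"
  shows "(\<Sum>\<rho>\<in>permutes_with_support n I. \<Prod>i\<in>I. f i (\<rho> i))
    \<le> (\<Prod>i\<in>I. \<Sum>l\<in>{..<n} - {i}. f i l)"
proof -
  have fin_I: "finite I" using assms(1) finite_subset by blast
  have inj: "inj_on (\<lambda>\<rho>. restrict \<rho> I) (permutes_with_support n I)"
  proof (rule inj_onI)
    fix \<rho> \<rho>'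
    assume \<rho>: "\<rho> \<in> permutes_with_support n I" "\<rho>' \<in> permutes_with_support n I"
      and restrict_eq: "restrict \<rho> I = restrict \<rho>' I"
    show "\<rho> = \<rho>'"
    proof
      fix i show "\<rho> i = \<rho>' i"
        using permutes_with_support_fixes_outside[OF \<rho>(1), of i]
          permutes_with_support_fixes_outside[OF \<rho>(2), of i] fun_cong[OF restrict_eq, of i]
        by (cases "i \<in> I") auto
    qed
  qed
  have "\<rho> i \<in> {..<n} - {i}" if "\<rho> \<in> permutes_with_support n I" "i \<in> I" for \<rho> i
    using that assms(1) permutes_in_image[of \<rho> "{..<n}" i]
    by (auto simp: permutes_with_support_def)
  then have image: "(\<lambda>\<rho>. restrict \<rho> I) ` permutes_with_support n I \<subseteq> PiE I (\<lambda>i. {..<n} - {i})"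
    by auto
  have "(\<Sum>\<rho>\<in>permutes_with_support n I. \<Prod>i\<in>I. f i (\<rho> i))
      = (\<Sum>h\<in>(\<lambda>\<rho>. restrict \<rho> I) ` permutes_with_support n I. \<Prod>i\<in>I. f i (h i))"
    by (simp add: sum.reindex[OF inj])
  also have "\<dots> \<le> (\<Sum>h\<in>PiE I (\<lambda>i. {..<n} - {i}). \<Prod>i\<in>I. f i (h i))"
    by (rule sum_mono2[OF _ image]) (auto intro: finite_PiE fin_I prod_nonneg f_nonneg)
  also have "\<dots> = (\<Prod>i\<in>I. \<Sum>l\<in>{..<n} - {i}. f i l)"
    by (rule prod_sum_PiE[symmetric]) (simp_all add: fin_I)
  finally show ?thesis .
qed

lemma unitary_mat_column_norm:
  assumes "unitary_mat M U" "k < M"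
  shows "(\<Sum>m<M. (cmod (U m k))\<^sup>2) = 1"
proof -
  have "complex_of_real (\<Sum>m<M. (cmod (U m k))\<^sup>2) = (\<Sum>m<M. U m k * cnj (U m k))"
    by (simp only: of_real_sum complex_norm_square)
  also have "\<dots> = 1"
    using assms by (simp add: unitary_mat_def)
  finally show ?thesis by (metis of_real_eq_1_iff)
qed

lemma sum_PiE_exact_support_le_prod_Ccoef:
  assumes U: "unitary_mat M U" and s: "\<forall>j<N. s j < M" and I: "I \<subseteq> {..<N}"
  shows "(\<Sum>\<rho>\<in>permutes_with_support N I.
            \<Sum>j\<in>PiE {..<N} (\<lambda>_. {..<M}). \<Prod>i<N. cmod (U (j i) (s i)) * cmod (U (j i) (s (\<rho> i))))
        \<le> (\<Prod>i\<in>I. Ccoef M N U s i)"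
proof -
  define overlap where "overlap i l = (\<Sum>m<M. cmod (U m (s i)) * cmod (U m (s l)))" for i l
  have overlap_self: "overlap i i = 1" if "i < N" for i
    using unitary_mat_column_norm[OF U] s that by (simp add: overlap_def power2_eq_square)
  have "(\<Sum>j\<in>PiE {..<N} (\<lambda>_. {..<M}). \<Prod>i<N. cmod (U (j i) (s i)) * cmod (U (j i) (s (\<rho> i))))
      = (\<Prod>i\<in>I. overlap i (\<rho> i))"
    if "\<rho> \<in> permutes_with_support N I" for \<rho>
  proof -
    have "(\<Sum>j\<in>PiE {..<N} (\<lambda>_. {..<M}). \<Prod>i<N. cmod (U (j i) (s i)) * cmod (U (j i) (s (\<rho> i))))
        = (\<Prod>i<N. overlap i (\<rho> i))"
      unfolding overlap_def by (rule prod_sum_PiE[symmetric]) simp_all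
    also have "\<dots> = (\<Prod>i\<in>I. overlap i (\<rho> i))"
      using I that overlap_self
      by (intro prod.mono_neutral_right) (auto simp: permutes_with_support_def)
    finally show ?thesis .
  qed
  then have "(\<Sum>\<rho>\<in>permutes_with_support N I.
        \<Sum>j\<in>PiE {..<N} (\<lambda>_. {..<M}). \<Prod>i<N. cmod (U (j i) (s i)) * cmod (U (j i) (s (\<rho> i))))
      = (\<Sum>\<rho>\<in>permutes_with_support N I.
          \<Prod>i\<in>I. overlap i (\<rho> i))"
    by (intro sum.cong refl) simp
  also have "\<dots> \<le> (\<Prod>i\<in>I. \<Sum>l\<in>{..<N} - {i}. overlap i l)"
    by (rule sum_exact_support_prod_le[OF I]) (simp add: overlap_def sum_nonneg)
  also have "\<dots> = (\<Prod>i\<in>I. Ccoef M N U s i)"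
    unfolding overlap_def Ccoef_def by (intro prod.cong refl sum.swap)
  finally show ?thesis .
qed

theorem mainTheorem6:
  fixes M N :: nat and U :: "nat \<Rightarrow> nat \<Rightarrow> complex" and s :: "nat \<Rightarrow> nat"
  assumes "unitary_mat M U"
    and "\<forall>j<N. s j < M"
    and "inj_on s {..<N}"
  shows "tvd M N U s \<le> (1/2) * (\<Sum>j\<in>PiE {..<N} (\<lambda>_. {..<M}).
            \<Sum>\<rho>\<in>{\<rho>. \<rho> permutes {..<N} \<and> \<rho> \<noteq> id}.
              \<Prod>i<N. cmod (U (j i) (s i)) * cmod (U (j i) (s (\<rho> i))))
    \<and> (1/2) * (\<Sum>j\<in>PiE {..<N} (\<lambda>_. {..<M}).
            \<Sum>\<rho>\<in>{\<rho>. \<rho> permutes {..<N} \<and> \<rho> \<noteq> id}.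
              \<Prod>i<N. cmod (U (j i) (s i)) * cmod (U (j i) (s (\<rho> i))))
      = (1/2) * (\<Sum>I\<in>{I. I \<subseteq> {..<N} \<and> I \<noteq> {}}.
            \<Sum>\<rho>\<in>{\<rho>. \<rho> permutes {..<N} \<and> (\<forall>i\<in>I. \<rho> i \<noteq> i) \<and> (\<forall>i\<in>{..<N} - I. \<rho> i = i)}.
              \<Sum>j\<in>PiE {..<N} (\<lambda>_. {..<M}).
                \<Prod>i<N. cmod (U (j i) (s i)) * cmod (U (j i) (s (\<rho> i))))
    \<and> tvd M N U s \<le> (1/2) * (\<Sum>I\<in>{I. I \<subseteq> {..<N} \<and> I \<noteq> {}}. \<Prod>i\<in>I. Ccoef M N U s i)"
proof -
  have regroup: "(\<Sum>j\<in>PiE {..<N} (\<lambda>_. {..<M}). \<Sum>\<rho>\<in>{\<rho>. \<rho> permutes {..<N} \<and> \<rho> \<noteq> id}.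
        \<Prod>i<N. cmod (U (j i) (s i)) * cmod (U (j i) (s (\<rho> i))))
      = (\<Sum>I\<in>{I. I \<subseteq> {..<N} \<and> I \<noteq> {}}. \<Sum>\<rho>\<in>permutes_with_support N I.
          \<Sum>j\<in>PiE {..<N} (\<lambda>_. {..<M}). \<Prod>i<N. cmod (U (j i) (s i)) * cmod (U (j i) (s (\<rho> i))))"
    by (subst sum.swap) (rule sum_nonid_permutes_group_by_support)
  have bound: "(\<Sum>I\<in>{I. I \<subseteq> {..<N} \<and> I \<noteq> {}}. \<Sum>\<rho>\<in>permutes_with_support N I.
          \<Sum>j\<in>PiE {..<N} (\<lambda>_. {..<M}). \<Prod>i<N. cmod (U (j i) (s i)) * cmod (U (j i) (s (\<rho> i))))
      \<le> (\<Sum>I\<in>{I. I \<subseteq> {..<N} \<and> I \<noteq> {}}. \<Prod>i\<in>I. Ccoef M N U s i)"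
    using assms(1,2) by (intro sum_mono sum_PiE_exact_support_le_prod_Ccoef) auto
  show ?thesis
    using tvd_le_sum_nonid_permutes[of M N U s] regroup bound
    unfolding permutes_with_support_def by simp
qed

end
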